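(* Let $A=(A_1,A_2)\in SL(2,\mathbb{C})^{\times2}$ satisfy $\sigma_{12}\neq0$. If $\nu_1\neq0$, then $A$ is conjugate (by a common element) to a pair $B=(B_1,B_2)$ of the form $B_1=\begin{pmatrix}\alpha_1+i\beta_1&0\\0&\alpha_1-i\beta_1\end{pmatrix}$, $B_2=\begin{pmatrix}\alpha_2+i\beta_2&i\delta_2\\i\delta_2&\alpha_2-i\beta_2\end{pmatrix}$ with $\alpha_1^2+\beta_1^2=1$, $\alpha_2^2+\beta_2^2+\delta_2^2=1$ and $\delta_2^2=\frac{\sigma_{12}}{2\nu_1}\neq0$. If $\nu_1=0$ and $\nu_2\neq0$, the same holds with the roles of $B_1$ and $B_2$ (and of the indices $1,2$) switched. If $\nu_1=\nu_2=0$, then $A$ is conjugate to a pair $B=(B_1,B_2)$ of the form $B_1=\begin{pmatrix}\alpha_1+\lambda&i\lambda\\i\lambda&\alpha_1-\lambda\end{pmatrix}$, $B_2=\begin{pmatrix}\alpha_2-\lambda&i\lambda\\i\lambda&\alpha_2+\lambda\end{pmatrix}$ with $\alpha_1^2=\alpha_2^2=1$ and $\lambda^4=\frac{\sigma_{12}}{16}\neq0$.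
   Context: All parameters are complex. $\sigma_{12}=\mathsf{tr}(A_1A_2A_1^{-1}A_2^{-1})-2$ and $\nu_j=\frac{(\mathsf{tr}A_j)^2}{2}-2$. *)

theory Defs
  imports "HOL-Analysis.Analysis"
begin

type_synonym cmat2 = "complex^2^2"

definition mat2 :: "complex \<Rightarrow> complex \<Rightarrow> complex \<Rightarrow> complex \<Rightarrow> cmat2" where
  "mat2 a b c d = vector [vector [a, b], vector [c, d]]"

definition SL2 :: "cmat2 \<Rightarrow> bool" where
  "SL2 A \<longleftrightarrow> det A = 1"

definition sigma12 :: "cmat2 \<Rightarrow> cmat2 \<Rightarrow> complex" where
  "sigma12 A1 A2 = trace (A1 ** A2 ** matrix_inv A1 ** matrix_inv A2) - 2"

definition nu :: "cmat2 \<Rightarrow> complex" where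
  "nu A = (trace A)\<^sup>2 / 2 - 2"

definition conj_pair :: "cmat2 \<Rightarrow> cmat2 \<Rightarrow> cmat2 \<Rightarrow> cmat2 \<Rightarrow> bool" where
  "conj_pair A1 A2 B1 B2 \<longleftrightarrow>
     (\<exists>G. SL2 G \<and> B1 = G ** A1 ** matrix_inv G \<and> B2 = G ** A2 ** matrix_inv G)"

end

theory Submission
  imports Defs
begin

text \<open>Conjugation preserves \<open>tr A\<^sub>1\<close>, \<open>tr A\<^sub>2\<close> and \<open>tr (A\<^sub>1 A\<^sub>2)\<close>, and by the Fricke trace
  identity these determine \<open>\<sigma>\<^sub>1\<^sub>2\<close>; moreover any invertible intertwiner can be rescaled into
  \<open>SL(2,\<complex>)\<close>.
  If \<open>\<nu>\<^sub>1 \<noteq> 0\<close>, then \<open>A\<^sub>1\<close> has distinct eigenvalues \<open>l, 1/l\<close> and is diagonalised; conjugating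
  further by \<open>diag(t, 1/t)\<close> with \<open>t\<^sup>4 = g/f\<close> makes the off-diagonal entries \<open>f, g\<close> of \<open>A\<^sub>2\<close>
  equal, and \<open>\<sigma>\<^sub>1\<^sub>2 = -f g (l - 1/l)\<^sup>2 = -2 f g \<nu>\<^sub>1\<close> identifies \<open>\<delta>\<^sub>2\<^sup>2 = -f g\<close>.
  If \<open>\<nu>\<^sub>1 = \<nu>\<^sub>2 = 0\<close>, then \<open>A\<^sub>i = \<plusminus>1 + N\<^sub>i\<close> with \<open>N\<^sub>i\<close> nilpotent and \<open>\<sigma>\<^sub>1\<^sub>2 = tr (N\<^sub>1 N\<^sub>2)\<^sup>2\<close>;
  a common basis makes \<open>A\<^sub>1\<close> upper and \<open>A\<^sub>2\<close> lower triangular, and one explicit conjugation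
  turns this pair into the symmetric normal form.\<close>

lemma mat2_nth [simp]:
  "mat2 a b c d $ 1 $ 1 = a" "mat2 a b c d $ 1 $ 2 = b"
  "mat2 a b c d $ 2 $ 1 = c" "mat2 a b c d $ 2 $ 2 = d"
  by (simp_all add: mat2_def)

lemma mat2_exhaust:
  obtains a b c d where "(M :: cmat2) = mat2 a b c d"
proof
  show "M = mat2 (M$1$1) (M$1$2) (M$2$1) (M$2$2)"
    by (simp add: vec_eq_iff forall_2)
qed

lemma mat2_eq_iff: "mat2 a b c d = mat2 a' b' c' d' \<longleftrightarrow> a = a' \<and> b = b' \<and> c = c' \<and> d = d'"
  by (metis mat2_nth)

lemma mat2_mult:
  "mat2 a b c d ** mat2 e f g h = mat2 (a*e + b*g) (a*f + b*h) (c*e + d*g) (c*f + d*h)"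
  by (simp add: vec_eq_iff forall_2 matrix_matrix_mult_def sum_2)

lemma mat_mat2: "(mat k :: cmat2) = mat2 k 0 0 k"
  by (simp add: vec_eq_iff forall_2 mat_def)

lemma det_mat2: "det (mat2 a b c d) = a*d - b*c"
  by (simp add: det_2)

lemma trace_mat2: "trace (mat2 a b c d) = a + d"
  by (simp add: trace_def sum_2)

lemma SL2_mat2_iff: "SL2 (mat2 a b c d) \<longleftrightarrow> a*d - b*c = 1"
  by (simp add: SL2_def det_mat2)

lemma matrix_inv_eqI:
  fixes A B :: "'a::comm_ring_1^'n^'n"
  assumes "A ** B = mat 1" "B ** A = mat 1"
  shows "matrix_inv A = B"
proof -
  let ?C = "matrix_inv A"
  have C: "A ** ?C = mat 1 \<and> ?C ** A = mat 1"
    unfolding matrix_inv_def by (rule someI[of _ B]) (use assms in blast)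
  have "?C = ?C ** (A ** B)" using assms by simp
  also have "\<dots> = (?C ** A) ** B" by (simp add: matrix_mul_assoc)
  finally show ?thesis using C by simp
qed

lemma matrix_inv_mat2:
  assumes "a*d - b*c = 1"
  shows "matrix_inv (mat2 a b c d) = mat2 d (-b) (-c) a"
  by (rule matrix_inv_eqI) (use assms in \<open>auto simp: mat2_mult mat_mat2 mat2_eq_iff algebra_simps\<close>)

lemma det_nz_matrix_inv:
  fixes G :: "'a::field^'n^'n"
  assumes "det G \<noteq> 0"
  shows "G ** matrix_inv G = mat 1" "matrix_inv G ** G = mat 1"
proof -
  have "invertible G" using assms by (simp add: invertible_det_nz)
  then have "G ** matrix_inv G = mat 1 \<and> matrix_inv G ** G = mat 1"
    unfolding invertible_def matrix_inv_def by (rule someI_ex)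
  then show "G ** matrix_inv G = mat 1" "matrix_inv G ** G = mat 1" by simp_all
qed

lemma SL2_det_nz: "SL2 G \<Longrightarrow> det G \<noteq> 0"
  by (simp add: SL2_def)

lemma sigma12_trace_identity:
  assumes "SL2 A" "SL2 B"
  shows "sigma12 A B = (trace A)\<^sup>2 + (trace B)\<^sup>2 + (trace (A ** B))\<^sup>2
                         - trace A * trace B * trace (A ** B) - 4"
proof -
  obtain a b c d where A: "A = mat2 a b c d" by (rule mat2_exhaust)
  obtain e f g h where B: "B = mat2 e f g h" by (rule mat2_exhaust)
  have dA: "a*d - b*c = 1" and dB: "e*h - f*g = 1" using assms by (simp_all add: A B SL2_mat2_iff)
  \<comment> \<open>with adjugates in place of inverses the identity holds for all \<open>2\<times>2\<close> matrices\<close>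
  have "trace (mat2 a b c d ** mat2 e f g h ** mat2 d (-b) (-c) a ** mat2 h (-f) (-g) e)
      = (e*h - f*g) * (a + d)\<^sup>2 + (a*d - b*c) * (e + h)\<^sup>2 + (a*e + b*g + c*f + d*h)\<^sup>2
        - (a + d) * (e + h) * (a*e + b*g + c*f + d*h) - 2 * (a*d - b*c) * (e*h - f*g)"
    unfolding mat2_mult trace_mat2 by algebra
  then show ?thesis
    unfolding sigma12_def A B matrix_inv_mat2[OF dA] matrix_inv_mat2[OF dB]
    by (simp add: dA dB mat2_mult trace_mat2 add.assoc)
qed

lemma sigma12_commute:
  assumes "SL2 A" "SL2 B"
  shows "sigma12 B A = sigma12 A B"
  using assms by (simp add: sigma12_trace_identity trace_mul_sym[of B A] mult.commute)

lemma conj_iff_intertwines: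
  fixes G :: "'a::field^'n^'n"
  assumes "det G \<noteq> 0"
  shows "B = G ** A ** matrix_inv G \<longleftrightarrow> G ** A = B ** G"
proof
  assume "B = G ** A ** matrix_inv G"
  then have "B ** G = G ** A ** (matrix_inv G ** G)" by (simp add: matrix_mul_assoc)
  then show "G ** A = B ** G" using det_nz_matrix_inv[OF assms] by simp
next
  assume "G ** A = B ** G"
  then have "G ** A ** matrix_inv G = B ** (G ** matrix_inv G)" by (simp add: matrix_mul_assoc)
  then show "B = G ** A ** matrix_inv G" using det_nz_matrix_inv[OF assms] by simp
qed

lemma conj_pair_iff:
  "conj_pair A1 A2 B1 B2 \<longleftrightarrow> (\<exists>G. SL2 G \<and> G ** A1 = B1 ** G \<and> G ** A2 = B2 ** G)"
  unfolding conj_pair_def using conj_iff_intertwines SL2_det_nz by blast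

lemma conj_pair_swap: "conj_pair A2 A1 B2 B1 \<Longrightarrow> conj_pair A1 A2 B1 B2"
  unfolding conj_pair_def by blast

lemma conj_pair_trans:
  assumes "conj_pair A1 A2 B1 B2" "conj_pair B1 B2 C1 C2"
  shows "conj_pair A1 A2 C1 C2"
proof -
  obtain G where G: "SL2 G" "G ** A1 = B1 ** G" "G ** A2 = B2 ** G"
    using assms(1) conj_pair_iff by blast
  obtain H where H: "SL2 H" "H ** B1 = C1 ** H" "H ** B2 = C2 ** H"
    using assms(2) conj_pair_iff by blast
  have "SL2 (H ** G)" using G(1) H(1) by (simp add: SL2_def det_mul)
  moreover have "(H ** G) ** A1 = C1 ** (H ** G)" "(H ** G) ** A2 = C2 ** (H ** G)"
    using G H by (metis matrix_mul_assoc)+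
  ultimately show ?thesis unfolding conj_pair_iff by blast
qed

lemma conj_pair_by_invertible:
  assumes "det G \<noteq> 0" "G ** A1 = B1 ** G" "G ** A2 = B2 ** G"
  shows "conj_pair A1 A2 B1 B2"
proof -
  define k where "k = csqrt (1 / det G)"
  have k: "k * k * det G = 1"
    unfolding k_def using assms(1) by (metis power2_csqrt power2_eq_square nonzero_divide_eq_eq)
  have scalar_commute: "mat k ** X = X ** mat k" for X :: cmat2
    by (cases X rule: mat2_exhaust) (simp add: mat_mat2 mat2_mult mult.commute)
  have "SL2 (mat k ** G)" using k by (simp add: SL2_def det_mul mat_mat2 det_mat2)
  moreover have "(mat k ** G) ** A = B ** (mat k ** G)" if "G ** A = B ** G" for A B
    by (metis that scalar_commute matrix_mul_assoc)
  ultimately show ?thesis unfolding conj_pair_iff using assms(2,3) by blast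
qed

lemma trace_conj:
  fixes G :: "'a::field^'n^'n"
  assumes "det G \<noteq> 0"
  shows "trace (G ** X ** matrix_inv G) = trace X"
proof -
  have "trace (G ** X ** matrix_inv G) = trace (matrix_inv G ** (G ** X))"
    by (rule trace_mul_sym)
  also have "\<dots> = trace X"
    by (simp add: matrix_mul_assoc det_nz_matrix_inv[OF assms])
  finally show ?thesis .
qed

lemma conj_pair_invariants:
  assumes "conj_pair A1 A2 B1 B2"
  shows "trace B1 = trace A1" "trace B2 = trace A2" "trace (B1 ** B2) = trace (A1 ** A2)"
    "det B1 = det A1" "det B2 = det A2"
proof -
  obtain G where G: "SL2 G" "B1 = G ** A1 ** matrix_inv G" "B2 = G ** A2 ** matrix_inv G"
    using assms conj_pair_def by blast
  have "B1 ** B2 = G ** A1 ** (matrix_inv G ** G) ** A2 ** matrix_inv G"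
    using G by (simp add: matrix_mul_assoc)
  also have "\<dots> = G ** (A1 ** A2) ** matrix_inv G"
    by (simp add: det_nz_matrix_inv SL2_det_nz G(1) matrix_mul_assoc)
  finally have "B1 ** B2 = G ** (A1 ** A2) ** matrix_inv G" .
  then show "trace B1 = trace A1" "trace B2 = trace A2" "trace (B1 ** B2) = trace (A1 ** A2)"
    using G trace_conj[OF SL2_det_nz[OF G(1)]] by simp_all
  have "det (matrix_inv G) = 1"
    using G(1) det_nz_matrix_inv(1)[OF SL2_det_nz[OF G(1)]] by (metis SL2_def det_I det_mul mult_1)
  then show "det B1 = det A1" "det B2 = det A2"
    using G by (simp_all add: SL2_def det_mul)
qed

lemma
  assumes "conj_pair A1 A2 B1 B2" "SL2 A1" "SL2 A2"
  shows SL2_conj_pair: "SL2 B1" "SL2 B2"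
    and nu_conj_pair: "nu B1 = nu A1" "nu B2 = nu A2"
    and sigma12_conj_pair: "sigma12 B1 B2 = sigma12 A1 A2"
  using assms conj_pair_invariants[OF assms(1)]
  by (simp_all add: SL2_def nu_def sigma12_trace_identity)

lemma mat2_diagonalizable:
  assumes "a*d - b*c = 1" "(a + d)\<^sup>2 \<noteq> 4"
  obtains G l m where "det G \<noteq> 0" "G ** mat2 a b c d = mat2 l 0 0 m ** G" "l * m = 1" "l \<noteq> m"
proof -
  note diagonal = that
  have eigenbasis: thesis if xy: "x + y = a + d" "x * y = 1" and D: "2 - x*a - y*d \<noteq> 0" for x y
  proof (rule diagonal)
    \<comment> \<open>the rows \<open>(x - d, b)\<close> and \<open>(c, y - a)\<close> are left eigenvectors for \<open>x\<close> and \<open>y\<close>\<close>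
    have "det (mat2 (x - d) b c (y - a)) = 2 - x*a - y*d"
      unfolding det_mat2 using assms(1) xy(2) by algebra
    then show "det (mat2 (x - d) b c (y - a)) \<noteq> 0" using D by simp
    show "mat2 (x - d) b c (y - a) ** mat2 a b c d = mat2 x 0 0 y ** mat2 (x - d) b c (y - a)"
      unfolding mat2_mult mat2_eq_iff using assms(1) xy by algebra
    show "x * y = 1" by (fact xy(2))
    have "(a + d)\<^sup>2 - 4 = (x - y)\<^sup>2"
      unfolding xy(1)[symmetric] using xy(2) by algebra
    then show "x \<noteq> y" using assms(2) by auto
  qed
  define r where "r = csqrt ((a + d)\<^sup>2 - 4)"
  define l where "l = (a + d + r) / 2"
  define m where "m = (a + d - r) / 2"
  have r: "r\<^sup>2 = (a + d)\<^sup>2 - 4" unfolding r_def by simp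
  have lm: "l + m = a + d" "l * m = 1"
    unfolding l_def m_def using r by (simp_all add: field_simps power2_eq_square)
  have "(2 - l*a - m*d) + (2 - m*a - l*d) = 4 - (a + d)\<^sup>2"
    using lm(1) by algebra
  then consider "2 - l*a - m*d \<noteq> 0" | "2 - m*a - l*d \<noteq> 0"
    using assms(2) by fastforce
  then show thesis
    using eigenbasis lm by (metis add.commute mult.commute)
qed

lemma conj_pair_diagonal:
  assumes "SL2 A1" "nu A1 \<noteq> 0"
  obtains l m B2 where "conj_pair A1 A2 (mat2 l 0 0 m) B2" "l * m = 1" "l \<noteq> m"
proof -
  obtain a b c d where A1: "A1 = mat2 a b c d" by (rule mat2_exhaust)
  have "a*d - b*c = 1" "(a + d)\<^sup>2 \<noteq> 4"
    using assms by (auto simp: A1 SL2_mat2_iff nu_def trace_mat2)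
  then obtain G l m where G: "det G \<noteq> 0" "G ** A1 = mat2 l 0 0 m ** G" "l * m = 1" "l \<noteq> m"
    unfolding A1 by (rule mat2_diagonalizable)
  have "G ** A2 = (G ** A2 ** matrix_inv G) ** G"
    using conj_iff_intertwines[OF G(1)] by blast
  with G have "conj_pair A1 A2 (mat2 l 0 0 m) (G ** A2 ** matrix_inv G)"
    by (blast intro: conj_pair_by_invertible)
  then show thesis using G(3,4) by (rule that)
qed

lemma conj_pair_diagonal_balance:
  assumes "f * g \<noteq> 0"
  obtains \<delta> where "\<delta>\<^sup>2 = - (f * g)"
    "conj_pair (mat2 l 0 0 m) (mat2 e f g h) (mat2 l 0 0 m) (mat2 e (\<i> * \<delta>) (\<i> * \<delta>) h)"
proof -
  define t where "t = csqrt (csqrt (g / f))"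
  have t4: "t ^ 4 * f = g"
    using assms unfolding t_def
    by (metis power2_csqrt power_mult num_double numeral_times_numeral mult_2_right
        mult_eq_0_iff nonzero_divide_eq_eq)
  then have "t \<noteq> 0" using assms by auto
  define \<delta> where "\<delta> = - \<i> * t\<^sup>2 * f"
  have i\<delta>: "\<i> * \<delta> = t\<^sup>2 * f" unfolding \<delta>_def by (simp add: algebra_simps)
  show thesis
  proof (rule that)
    show "\<delta>\<^sup>2 = - (f * g)"
      unfolding \<delta>_def t4[symmetric] by (simp add: power2_eq_square power4_eq_xxxx algebra_simps)
    let ?G = "mat2 t 0 0 (1 / t)"
    have "det ?G \<noteq> 0" using \<open>t \<noteq> 0\<close> by (simp add: det_mat2)
    moreover have "?G ** mat2 l 0 0 m = mat2 l 0 0 m ** ?G"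
      by (simp add: mat2_mult mult.commute)
    moreover have "?G ** mat2 e f g h = mat2 e (\<i> * \<delta>) (\<i> * \<delta>) h ** ?G"
      unfolding i\<delta> mat2_mult mat2_eq_iff t4[symmetric] using \<open>t \<noteq> 0\<close>
      by (simp add: field_simps power2_eq_square power4_eq_xxxx)
    ultimately show "conj_pair (mat2 l 0 0 m) (mat2 e f g h) (mat2 l 0 0 m) (mat2 e (\<i> * \<delta>) (\<i> * \<delta>) h)"
      by (rule conj_pair_by_invertible)
  qed
qed

lemma sigma12_diagonal:
  assumes "l * m = 1" "e*h - f*g = 1"
  shows "sigma12 (mat2 l 0 0 m) (mat2 e f g h) = - (f * g) * (l - m)\<^sup>2"
proof -
  have "l*m - 0*0 = 1" using assms(1) by simp
  then show ?thesis
    using assms by (simp add: sigma12_trace_identity SL2_mat2_iff mat2_mult trace_mat2) algebra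
qed

lemma nu_diagonal: "l * m = 1 \<Longrightarrow> nu (mat2 l 0 0 m) = (l - m)\<^sup>2 / 2"
  by (simp add: nu_def trace_mat2 field_simps power2_eq_square)

lemma complex_sum_diff_decomposition:
  obtains \<alpha> \<beta> :: complex where "x = \<alpha> + \<i> * \<beta>" "y = \<alpha> - \<i> * \<beta>" "\<alpha>\<^sup>2 + \<beta>\<^sup>2 = x * y"
proof
  show "x = (x + y) / 2 + \<i> * (- \<i> * (x - y) / 2)" "y = (x + y) / 2 - \<i> * (- \<i> * (x - y) / 2)"
    by (simp_all add: field_simps)
  show "((x + y) / 2)\<^sup>2 + (- \<i> * (x - y) / 2)\<^sup>2 = x * y"
    by (simp add: field_simps power2_eq_square)
qed

lemma conj_pair_normal_form_nu_nonzero: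
  assumes "SL2 A1" "SL2 A2" "sigma12 A1 A2 \<noteq> 0" "nu A1 \<noteq> 0"
  shows "\<exists>\<alpha>1 \<beta>1 \<alpha>2 \<beta>2 \<delta>2.
             conj_pair A1 A2
               (mat2 (\<alpha>1 + \<i> * \<beta>1) 0 0 (\<alpha>1 - \<i> * \<beta>1))
               (mat2 (\<alpha>2 + \<i> * \<beta>2) (\<i> * \<delta>2) (\<i> * \<delta>2) (\<alpha>2 - \<i> * \<beta>2))
           \<and> \<alpha>1\<^sup>2 + \<beta>1\<^sup>2 = 1 \<and> \<alpha>2\<^sup>2 + \<beta>2\<^sup>2 + \<delta>2\<^sup>2 = 1
           \<and> \<delta>2\<^sup>2 = sigma12 A1 A2 / (2 * nu A1) \<and> \<delta>2\<^sup>2 \<noteq> 0"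
proof -
  obtain l m B2 where diag: "conj_pair A1 A2 (mat2 l 0 0 m) B2" "l * m = 1" "l \<noteq> m"
    using assms(1,4) by (rule conj_pair_diagonal)
  obtain e f g h where B2: "B2 = mat2 e f g h" by (rule mat2_exhaust)
  have det2: "e*h - f*g = 1"
    using SL2_conj_pair(2)[OF diag(1) assms(1,2)] by (simp add: B2 SL2_mat2_iff)
  have \<sigma>: "sigma12 A1 A2 = - (f * g) * (l - m)\<^sup>2"
    using sigma12_conj_pair[OF diag(1) assms(1,2)] sigma12_diagonal[OF diag(2) det2] by (simp add: B2)
  have \<nu>: "nu A1 = (l - m)\<^sup>2 / 2"
    using nu_conj_pair(1)[OF diag(1) assms(1,2)] nu_diagonal[OF diag(2)] by simp
  have "f * g \<noteq> 0" using \<sigma> assms(3) by auto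
  then obtain \<delta> where \<delta>: "\<delta>\<^sup>2 = - (f * g)"
    "conj_pair (mat2 l 0 0 m) B2 (mat2 l 0 0 m) (mat2 e (\<i> * \<delta>) (\<i> * \<delta>) h)"
    unfolding B2 by (rule conj_pair_diagonal_balance)
  obtain \<alpha>1 \<beta>1 where \<alpha>\<beta>1: "l = \<alpha>1 + \<i> * \<beta>1" "m = \<alpha>1 - \<i> * \<beta>1" "\<alpha>1\<^sup>2 + \<beta>1\<^sup>2 = l * m"
    by (rule complex_sum_diff_decomposition)
  obtain \<alpha>2 \<beta>2 where \<alpha>\<beta>2: "e = \<alpha>2 + \<i> * \<beta>2" "h = \<alpha>2 - \<i> * \<beta>2" "\<alpha>2\<^sup>2 + \<beta>2\<^sup>2 = e * h"
    by (rule complex_sum_diff_decomposition)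
  show ?thesis
  proof (intro exI conjI)
    show "conj_pair A1 A2 (mat2 (\<alpha>1 + \<i> * \<beta>1) 0 0 (\<alpha>1 - \<i> * \<beta>1))
        (mat2 (\<alpha>2 + \<i> * \<beta>2) (\<i> * \<delta>) (\<i> * \<delta>) (\<alpha>2 - \<i> * \<beta>2))"
      using conj_pair_trans[OF diag(1) \<delta>(2)] \<alpha>\<beta>1 \<alpha>\<beta>2 by simp
    show "\<alpha>1\<^sup>2 + \<beta>1\<^sup>2 = 1" "\<alpha>2\<^sup>2 + \<beta>2\<^sup>2 + \<delta>\<^sup>2 = 1"
      using \<alpha>\<beta>1(3) \<alpha>\<beta>2(3) diag(2) \<delta>(1) det2 by simp_all
    show "\<delta>\<^sup>2 = sigma12 A1 A2 / (2 * nu A1)"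
      using diag(3) by (simp add: \<sigma> \<nu> \<delta>(1))
    show "\<delta>\<^sup>2 \<noteq> 0" using \<delta>(1) \<open>f * g \<noteq> 0\<close> by simp
  qed
qed

lemma mat2_scalar_traceless_exhaust:
  obtains s p b c where "(M :: cmat2) = mat2 (s + p) b c (s - p)"
proof -
  obtain a b c d where "M = mat2 a b c d" by (rule mat2_exhaust)
  then have "M = mat2 ((a + d) / 2 + (a - d) / 2) b c ((a + d) / 2 - (a - d) / 2)"
    by (simp add: field_simps)
  then show thesis by (rule that)
qed

text \<open>With \<open>A\<^sub>i = s\<^sub>i + N\<^sub>i\<close> and \<open>N\<^sub>i\<close> nilpotent, the intertwiner has the rows \<open>v\<close> and \<open>v N\<^sub>1\<close>
  for a vector \<open>v\<close> with \<open>v N\<^sub>2 = 0\<close>; since \<open>N\<^sub>1 N\<^sub>2 + N\<^sub>2 N\<^sub>1 = \<tau>\<close> with \<open>\<tau> = tr (N\<^sub>1 N\<^sub>2) \<noteq> 0\<close>,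
  these rows are independent.\<close>

lemma nilpotent_pair_intertwiner:
  fixes p b c u f g :: complex
  defines "\<tau> \<equiv> 2*p*u + b*g + c*f"
  assumes N1: "p\<^sup>2 + b*c = 0" and N2: "u\<^sup>2 + f*g = 0" and "\<tau> \<noteq> 0"
  obtains G where "det G \<noteq> 0"
    "G ** mat2 (s1 + p) b c (s1 - p) = mat2 s1 1 0 s1 ** G"
    "G ** mat2 (s2 + u) f g (s2 - u) = mat2 s2 0 \<tau> s2 ** G"
proof -
  note intertwiner = that
  have rows: thesis if v: "x*u + y*g = 0" "x*f - y*u = 0" and D: "x^2*b - 2*x*y*p - y^2*c \<noteq> 0"
    for x y
  proof (rule intertwiner)
    let ?G = "mat2 x y (x*p + y*c) (x*b - y*p)"
    have "det ?G = x^2*b - 2*x*y*p - y^2*c" unfolding det_mat2 by algebra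
    then show "det ?G \<noteq> 0" using D by simp
    show "?G ** mat2 (s1 + p) b c (s1 - p) = mat2 s1 1 0 s1 ** ?G"
      unfolding mat2_mult mat2_eq_iff using N1 by algebra
    show "?G ** mat2 (s2 + u) f g (s2 - u) = mat2 s2 0 \<tau> s2 ** ?G"
      unfolding mat2_mult mat2_eq_iff \<tau>_def using v by algebra
  qed
  show thesis
  proof (cases "g = 0")
    case True
    then have "u = 0" using N2 by simp
    with True have "c \<noteq> 0" using \<open>\<tau> \<noteq> 0\<close> by (auto simp: \<tau>_def)
    then show thesis using True \<open>u = 0\<close> by (intro rows[of 0 1]) simp_all
  next
    case False
    have "g^2*b - 2*g*(-u)*p - (-u)^2*c = g * \<tau>" unfolding \<tau>_def using N2 by algebra
    then show thesis using False \<open>\<tau> \<noteq> 0\<close> N2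
      by (intro rows[of g "-u"]) (simp_all add: algebra_simps power2_eq_square)
  qed
qed

lemma conj_pair_triangular_nu_zero:
  assumes "SL2 A1" "SL2 A2" "sigma12 A1 A2 \<noteq> 0" "nu A1 = 0" "nu A2 = 0"
  obtains s1 s2 w where "s1\<^sup>2 = 1" "s2\<^sup>2 = 1" "w\<^sup>2 = sigma12 A1 A2"
    "conj_pair A1 A2 (mat2 s1 1 0 s1) (mat2 s2 0 w s2)"
proof -
  obtain s1 p b c where A1: "A1 = mat2 (s1 + p) b c (s1 - p)" by (rule mat2_scalar_traceless_exhaust)
  obtain s2 u f g where A2: "A2 = mat2 (s2 + u) f g (s2 - u)" by (rule mat2_scalar_traceless_exhaust)
  define \<tau> where "\<tau> = 2*p*u + b*g + c*f"
  have s: "s1\<^sup>2 = 1" "s2\<^sup>2 = 1"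
    using assms(4,5) by (simp_all add: A1 A2 nu_def trace_mat2 field_simps power2_eq_square)
  have det: "(s1 + p) * (s1 - p) - b*c = 1" "(s2 + u) * (s2 - u) - f*g = 1"
    using assms(1,2) by (simp_all add: A1 A2 SL2_mat2_iff)
  have N: "p\<^sup>2 + b*c = 0" "u\<^sup>2 + f*g = 0"
    using det s by (simp_all add: power2_eq_square algebra_simps)
  have \<sigma>: "sigma12 A1 A2 = \<tau>\<^sup>2"
    using assms(1,2) s unfolding \<tau>_def
    by (simp add: sigma12_trace_identity A1 A2 mat2_mult trace_mat2) algebra
  then have "\<tau> \<noteq> 0" using assms(3) by auto
  with N obtain G where "det G \<noteq> 0"
    "G ** A1 = mat2 s1 1 0 s1 ** G" "G ** A2 = mat2 s2 0 \<tau> s2 ** G"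
    unfolding A1 A2 \<tau>_def by (rule nilpotent_pair_intertwiner)
  then have "conj_pair A1 A2 (mat2 s1 1 0 s1) (mat2 s2 0 \<tau> s2)"
    by (rule conj_pair_by_invertible)
  with s \<sigma> show thesis by (intro that) simp_all
qed

lemma conj_pair_triangular_symmetric:
  assumes "lam \<noteq> 0"
  shows "conj_pair (mat2 s1 1 0 s1) (mat2 s2 0 (- 4 * lam\<^sup>2) s2)
           (mat2 (s1 + lam) (\<i> * lam) (\<i> * lam) (s1 - lam))
           (mat2 (s2 - lam) (\<i> * lam) (\<i> * lam) (s2 + lam))"
proof (rule conj_pair_by_invertible)
  let ?G = "mat2 (2 * lam * \<i>) \<i> (- 2 * lam) 1"
  show "det ?G \<noteq> 0" using assms by (simp add: det_mat2)
  show "?G ** mat2 s1 1 0 s1 = mat2 (s1 + lam) (\<i> * lam) (\<i> * lam) (s1 - lam) ** ?G"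
    unfolding mat2_mult mat2_eq_iff by (simp add: algebra_simps)
  show "?G ** mat2 s2 0 (- 4 * lam\<^sup>2) s2 = mat2 (s2 - lam) (\<i> * lam) (\<i> * lam) (s2 + lam) ** ?G"
    unfolding mat2_mult mat2_eq_iff by (simp add: algebra_simps power2_eq_square)
qed

lemma conj_pair_normal_form_nu_zero:
  assumes "SL2 A1" "SL2 A2" "sigma12 A1 A2 \<noteq> 0" "nu A1 = 0" "nu A2 = 0"
  shows "\<exists>\<alpha>1 \<alpha>2 lam.
             conj_pair A1 A2
               (mat2 (\<alpha>1 + lam) (\<i> * lam) (\<i> * lam) (\<alpha>1 - lam))
               (mat2 (\<alpha>2 - lam) (\<i> * lam) (\<i> * lam) (\<alpha>2 + lam))
           \<and> \<alpha>1\<^sup>2 = 1 \<and> \<alpha>2\<^sup>2 = 1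
           \<and> lam ^ 4 = sigma12 A1 A2 / 16 \<and> lam ^ 4 \<noteq> 0"
proof -
  obtain s1 s2 w where s: "s1\<^sup>2 = 1" "s2\<^sup>2 = 1" and w: "w\<^sup>2 = sigma12 A1 A2"
    and triangular: "conj_pair A1 A2 (mat2 s1 1 0 s1) (mat2 s2 0 w s2)"
    using assms by (rule conj_pair_triangular_nu_zero)
  define lam where "lam = csqrt (- w / 4)"
  have w_lam: "w = - 4 * lam\<^sup>2" unfolding lam_def by simp
  have lam4: "lam ^ 4 = sigma12 A1 A2 / 16"
    unfolding w[symmetric] w_lam by (simp add: power2_eq_square power4_eq_xxxx)
  have "lam \<noteq> 0" using lam4 assms(3) by auto
  show ?thesis
  proof (intro exI conjI)
    show "conj_pair A1 A2 (mat2 (s1 + lam) (\<i> * lam) (\<i> * lam) (s1 - lam))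
        (mat2 (s2 - lam) (\<i> * lam) (\<i> * lam) (s2 + lam))"
      using triangular conj_pair_triangular_symmetric[OF \<open>lam \<noteq> 0\<close>]
      unfolding w_lam by (rule conj_pair_trans)
  qed (use s lam4 assms(3) \<open>lam \<noteq> 0\<close> in simp_all)
qed

theorem proposition5p3:
  fixes A1 A2 :: cmat2
  assumes "SL2 A1" and "SL2 A2" and "sigma12 A1 A2 \<noteq> 0"
  shows "(nu A1 \<noteq> 0 \<longrightarrow>
          (\<exists>\<alpha>1 \<beta>1 \<alpha>2 \<beta>2 \<delta>2.
             conj_pair A1 A2
               (mat2 (\<alpha>1 + \<i> * \<beta>1) 0 0 (\<alpha>1 - \<i> * \<beta>1))
               (mat2 (\<alpha>2 + \<i> * \<beta>2) (\<i> * \<delta>2) (\<i> * \<delta>2) (\<alpha>2 - \<i> * \<beta>2))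
           \<and> \<alpha>1\<^sup>2 + \<beta>1\<^sup>2 = 1 \<and> \<alpha>2\<^sup>2 + \<beta>2\<^sup>2 + \<delta>2\<^sup>2 = 1
           \<and> \<delta>2\<^sup>2 = sigma12 A1 A2 / (2 * nu A1) \<and> \<delta>2\<^sup>2 \<noteq> 0))
       \<and> (nu A1 = 0 \<and> nu A2 \<noteq> 0 \<longrightarrow>
          (\<exists>\<alpha>1 \<beta>1 \<alpha>2 \<beta>2 \<delta>1.
             conj_pair A1 A2
               (mat2 (\<alpha>1 + \<i> * \<beta>1) (\<i> * \<delta>1) (\<i> * \<delta>1) (\<alpha>1 - \<i> * \<beta>1))
               (mat2 (\<alpha>2 + \<i> * \<beta>2) 0 0 (\<alpha>2 - \<i> * \<beta>2))
           \<and> \<alpha>2\<^sup>2 + \<beta>2\<^sup>2 = 1 \<and> \<alpha>1\<^sup>2 + \<beta>1\<^sup>2 + \<delta>1\<^sup>2 = 1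
           \<and> \<delta>1\<^sup>2 = sigma12 A1 A2 / (2 * nu A2) \<and> \<delta>1\<^sup>2 \<noteq> 0))
       \<and> (nu A1 = 0 \<and> nu A2 = 0 \<longrightarrow>
          (\<exists>\<alpha>1 \<alpha>2 lam.
             conj_pair A1 A2
               (mat2 (\<alpha>1 + lam) (\<i> * lam) (\<i> * lam) (\<alpha>1 - lam))
               (mat2 (\<alpha>2 - lam) (\<i> * lam) (\<i> * lam) (\<alpha>2 + lam))
           \<and> \<alpha>1\<^sup>2 = 1 \<and> \<alpha>2\<^sup>2 = 1
           \<and> lam ^ 4 = sigma12 A1 A2 / 16 \<and> lam ^ 4 \<noteq> 0))"
proof -
  have "sigma12 A2 A1 \<noteq> 0" using sigma12_commute[OF assms(1,2)] assms(3) by simp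
  note swapped = conj_pair_normal_form_nu_nonzero[OF assms(2,1) this]
  show ?thesis
    using conj_pair_normal_form_nu_nonzero[OF assms] conj_pair_normal_form_nu_zero[OF assms]
      swapped sigma12_commute[OF assms(1,2)] conj_pair_swap
    by (intro conjI impI) metis+
qed

end
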